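(* Let $w$ be a permutation with $\{k,k+1\}\subseteq\textsf{supp}(w)$. Then exactly one of the following holds: (i) $w$ has a reduced word of the form $\cdots k\cdots(k+1)\cdots k\cdots$ or of the form $\cdots(k+1)\cdots k\cdots(k+1)\cdots$; (ii) $w$ has a reduced word of the form (a word in letters $\le k$)(a word in letters $\ge k+1$) or of the form (a word in letters $\ge k+1$)(a word in letters $\le k$).
   Context: $\sigma_i=(i,i+1)$; reduced words are sequences of subscripts of reduced expressions of a permutation as products of the $\sigma_i$. $\textsf{supp}(w)$ is the set of letters appearing in reduced words of $w$. *)

theory Defs
  imports Main
begin

text \<open>Permutations of the positive integers with finite support (0 is fixed and unused).\<close>
definition fin_perm :: "(nat \<Rightarrow> nat) \<Rightarrow> bool" where
  "fin_perm w \<longleftrightarrow> bij w \<and> finite {i. w i \<noteq> i} \<and> w 0 = 0"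

definition sigma :: "nat \<Rightarrow> nat \<Rightarrow> nat" where
  "sigma i = (\<lambda>x. if x = i then Suc i else if x = Suc i then i else x)"

definition is_word :: "nat list \<Rightarrow> bool" where
  "is_word a \<longleftrightarrow> (\<forall>x\<in>set a. 1 \<le> x)"

definition word_perm :: "nat list \<Rightarrow> nat \<Rightarrow> nat" where
  "word_perm a = foldr (\<lambda>i f. sigma i \<circ> f) a id"

definition reduced_word :: "(nat \<Rightarrow> nat) \<Rightarrow> nat list \<Rightarrow> bool" where
  "reduced_word w a \<longleftrightarrow> is_word a \<and> word_perm a = w \<and>
     (\<forall>b. is_word b \<and> word_perm b = w \<longrightarrow> length a \<le> length b)"

definition supp :: "(nat \<Rightarrow> nat) \<Rightarrow> nat set" where
  "supp w = {x. \<exists>a. reduced_word w a \<and> x \<in> set a}"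

definition has_pattern :: "nat list \<Rightarrow> nat \<Rightarrow> nat \<Rightarrow> bool" where
  "has_pattern a x y \<longleftrightarrow> (\<exists>p q r. p < q \<and> q < r \<and> r < length a \<and>
      a ! p = x \<and> a ! q = y \<and> a ! r = x)"

end

(*
  Say that w splits at k if it maps {0, ..., k} into {0, ..., k+1}. This holds exactly when w has
  a reduced word u v with u in the letters <= k and v in the letters >= k+1: peel off right
  descents i >= k+1; when none is left, w fixes everything beyond k+1. Reversing words exchanges
  w with its inverse, so alternative (ii) holds iff w or w^-1 splits at k.

  If w splits at k, so does the prefix permutation at every step of a reduced word, since each
  letter is an ascent. Right after a letter k+1 the value at position k+1 exceeds k+1 (pigeonhole),
  and it stays so; a later letter k would move it to position k. Hence no reduced word of w has
  k+1 before k and, applied to w^-1 and reversed words, none has k before k+1: (i) fails.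

  If neither w nor w^-1 splits at k, descents other than k, k+1 are peeled off by induction on the
  number of inversions. Without them w is increasing on [1, k] and on [k+2, oo), hence
  w k > k+1 and w (k+2) <= k, and depending on the order of w k, w (k+1), w (k+2) a reduced word
  of w ends in k (k+1) k, or in k (k+1) resp. (k+1) k after a prefix that must contain the other
  letter.
*)
theory Submission
  imports Defs
begin

lemma le_if_increasing_between:
  fixes f :: "nat \<Rightarrow> 'a::order"
  assumes "\<And>i. m \<le> i \<Longrightarrow> i < n \<Longrightarrow> f i < f (Suc i)" and "m \<le> n"
  shows "f m \<le> f n"
  using assms(2)
proof (induction rule: dec_induct)
  case (step j)
  then show ?case
    using assms(1)[of j] by (blast intro: less_imp_le order_le_less_trans)
qed simp

section \<open>Simple transpositions and words\<close>

lemma sigma_sigma [simp]: "sigma i (sigma i x) = x"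
  by (auto simp: sigma_def)

lemma sigma_self [simp]: "sigma i i = Suc i"
  and sigma_Suc_self [simp]: "sigma i (Suc i) = i"
  by (simp_all add: sigma_def)

lemma sigma_other: "x \<noteq> i \<Longrightarrow> x \<noteq> Suc i \<Longrightarrow> sigma i x = x"
  by (simp add: sigma_def)

lemma sigma_le_iff: "i \<noteq> n \<Longrightarrow> sigma i x \<le> n \<longleftrightarrow> x \<le> n"
  by (auto simp: sigma_def)

lemma sigma_less: "x < y \<Longrightarrow> (x, y) \<noteq> (i, Suc i) \<Longrightarrow> sigma i x < sigma i y"
  by (auto simp: sigma_def)

lemma sigma_comp_sigma [simp]: "sigma i \<circ> sigma i = id"
  by (simp add: fun_eq_iff)

lemma bij_sigma: "bij (sigma i)"
  using o_bij sigma_comp_sigma by blast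

lemma word_perm_Nil [simp]: "word_perm [] = id"
  by (simp add: word_perm_def)

lemma word_perm_Cons [simp]: "word_perm (i # a) = sigma i \<circ> word_perm a"
  by (simp add: word_perm_def)

lemma word_perm_append [simp]: "word_perm (a @ b) = word_perm a \<circ> word_perm b"
  by (induction a) (simp_all add: comp_assoc)

lemma word_perm_snoc: "word_perm (a @ [i]) = word_perm a \<circ> sigma i"
  by simp

lemma word_perm_rev: "word_perm (rev a) = inv (word_perm a)"
proof -
  have cancel: "word_perm (rev a) \<circ> word_perm a = id" for a
    by (induction a) (simp_all add: fun_eq_iff)
  show ?thesis
    using cancel[of a] cancel[of "rev a"] by (simp add: inv_unique_comp)
qed

lemma word_perm_fixes: "\<forall>i\<in>set a. x < i \<Longrightarrow> word_perm a x = x"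
  by (induction a) (simp_all add: sigma_other)

lemma word_perm_le_iff: "n \<notin> set a \<Longrightarrow> word_perm a x \<le> n \<longleftrightarrow> x \<le> n"
  by (induction a) (simp_all add: sigma_le_iff)

lemma fin_perm_id: "fin_perm id"
  by (simp add: fin_perm_def)

lemma fin_perm_fixes_above:
  assumes "fin_perm w"
  shows "\<exists>n. \<forall>x>n. w x = x"
proof -
  have "finite {x. w x \<noteq> x}"
    using assms by (simp add: fin_perm_def)
  then obtain n where "\<forall>x\<in>{x. w x \<noteq> x}. x \<le> n"
    unfolding finite_nat_set_iff_bounded_le by blast
  then show ?thesis
    by (meson leD mem_Collect_eq)
qed

lemma fin_perm_comp_sigma:
  assumes "fin_perm w" and "1 \<le> i"
  shows "fin_perm (w \<circ> sigma i)"
proof -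
  have "{x. (w \<circ> sigma i) x \<noteq> x} \<subseteq> {x. w x \<noteq> x} \<union> {i, Suc i}"
    using sigma_other by fastforce
  then have "finite {x. (w \<circ> sigma i) x \<noteq> x}"
    using assms(1) unfolding fin_perm_def by (meson finite.emptyI finite.insertI finite_UnI finite_subset)
  moreover have "bij (w \<circ> sigma i)"
    using assms(1) bij_sigma unfolding fin_perm_def by (blast intro: bij_comp)
  moreover have "(w \<circ> sigma i) 0 = 0"
    using assms unfolding fin_perm_def by (simp add: sigma_def)
  ultimately show ?thesis
    by (simp add: fin_perm_def)
qed

lemma fin_perm_word_perm: "is_word a \<Longrightarrow> fin_perm (word_perm a)"
  by (induction a rule: rev_induct) (simp_all add: is_word_def fin_perm_id fin_perm_comp_sigma)

lemma fin_perm_ascent_if_not_descent: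
  assumes "fin_perm w" and "\<not> w (Suc i) < w i"
  shows "w i < w (Suc i)"
proof -
  have "inj w"
    using assms(1) by (simp add: fin_perm_def bij_is_inj)
  then have "w i \<noteq> w (Suc i)"
    by (simp add: inj_eq)
  then show ?thesis
    using assms(2) by linarith
qed

section \<open>Inversions and reduced words\<close>

definition inversions :: "(nat \<Rightarrow> nat) \<Rightarrow> (nat \<times> nat) set" where
  "inversions w = {(x, y). x < y \<and> w y < w x}"

definition num_inversions :: "(nat \<Rightarrow> nat) \<Rightarrow> nat" where
  "num_inversions w = card (inversions w)"

lemma num_inversions_id [simp]: "num_inversions id = 0"
proof -
  have "inversions id = {}"
    by (auto simp: inversions_def)
  then show ?thesis
    by (simp add: num_inversions_def)
qed

lemma finite_inversions:
  assumes "fin_perm w"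
  shows "finite (inversions w)"
proof -
  have inj: "inj w"
    using assms by (simp add: fin_perm_def bij_is_inj)
  obtain n where n: "\<And>x. n < x \<Longrightarrow> w x = x"
    using fin_perm_fixes_above[OF assms] by blast
  have below: "w z \<le> n" if "z \<le> n" for z
  proof (rule ccontr)
    assume "\<not> w z \<le> n"
    then have "w (w z) = w z"
      using n by simp
    then have "w z = z"
      using inj by (simp add: inj_eq)
    then show False
      using \<open>\<not> w z \<le> n\<close> that by simp
  qed
  have "x \<le> n \<and> y \<le> n" if "x < y" "w y < w x" for x y
  proof (rule ccontr)
    assume "\<not> (x \<le> n \<and> y \<le> n)"
    then have "\<not> y \<le> n"
      using that by linarith
    then have "w y = y"
      using n by simp
    then have "n < w x"
      using that \<open>\<not> y \<le> n\<close> by simp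
    then have "n < x"
      using below not_le by blast
    then show False
      using n[of x] that \<open>w y = y\<close> by simp
  qed
  then have "inversions w \<subseteq> {..n} \<times> {..n}"
    by (auto simp: inversions_def)
  then show ?thesis
    by (rule finite_subset) simp
qed

lemma sigma_pair_inversions:
  assumes "(x, y) \<in> inversions w - {(i, Suc i)}"
  shows "(sigma i x, sigma i y) \<in> inversions (w \<circ> sigma i) - {(i, Suc i)}"
proof -
  have "x < y" "w y < w x" "(x, y) \<noteq> (i, Suc i)"
    using assms by (auto simp: inversions_def)
  moreover have "(sigma i x, sigma i y) \<noteq> (i, Suc i)"
    using \<open>x < y\<close> by (metis Pair_inject sigma_sigma sigma_self Suc_lessD less_irrefl)
  ultimately show ?thesis
    using sigma_less by (simp add: inversions_def)
qed

lemma map_prod_sigma_inversions: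
  "map_prod (sigma i) (sigma i) ` (inversions w - {(i, Suc i)})
     \<subseteq> inversions (w \<circ> sigma i) - {(i, Suc i)}"
  using sigma_pair_inversions by fastforce

lemma bij_betw_inversions_comp_sigma:
  "bij_betw (map_prod (sigma i) (sigma i))
     (inversions w - {(i, Suc i)}) (inversions (w \<circ> sigma i) - {(i, Suc i)})"
  using map_prod_sigma_inversions[of i w] map_prod_sigma_inversions[of i "w \<circ> sigma i"]
  by (intro bij_betw_byWitness[where f' = "map_prod (sigma i) (sigma i)"])
     (auto simp: comp_assoc)

lemma num_inversions_comp_sigma_le: "num_inversions (w \<circ> sigma i) \<le> Suc (num_inversions w)"
proof -
  let ?D = "\<lambda>v. inversions v - {(i, Suc i)}"
  have "card (inversions (w \<circ> sigma i)) \<le> Suc (card (?D (w \<circ> sigma i)))"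
    using card_Diff_singleton_if[of "inversions (w \<circ> sigma i)" "(i, Suc i)"]
    by (auto split: if_splits)
  moreover have "card (?D (w \<circ> sigma i)) = card (?D w)"
    using bij_betw_inversions_comp_sigma by (rule bij_betw_same_card[symmetric])
  moreover have "card (?D w) \<le> card (inversions w)"
    by (rule card_Diff1_le)
  ultimately show ?thesis
    unfolding num_inversions_def by linarith
qed

lemma num_inversions_comp_sigma_descent:
  assumes "finite (inversions w)" and "w (Suc i) < w i"
  shows "Suc (num_inversions (w \<circ> sigma i)) = num_inversions w"
proof -
  have "(i, Suc i) \<in> inversions w" "(i, Suc i) \<notin> inversions (w \<circ> sigma i)"
    using assms(2) by (simp_all add: inversions_def)
  then have "Suc (card (inversions (w \<circ> sigma i))) = Suc (card (inversions w - {(i, Suc i)}))"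
    using bij_betw_same_card[OF bij_betw_inversions_comp_sigma[of i w]] by simp
  also have "\<dots> = card (inversions w)"
    using assms(1) \<open>(i, Suc i) \<in> inversions w\<close> by (rule card_Suc_Diff1)
  finally show ?thesis
    by (simp add: num_inversions_def)
qed

lemma fixes_above_if_increasing:
  assumes "fin_perm w"
    and incr: "\<And>i. L \<le> i \<Longrightarrow> w i < w (Suc i)"
    and low: "\<And>z. z < L \<Longrightarrow> w z \<le> L"
    and "L < x"
  shows "w x = x"
proof -
  have inj: "inj w"
    using assms(1) by (simp add: fin_perm_def bij_is_inj)
  obtain n where n: "\<And>x. n < x \<Longrightarrow> w x = x"
    using fin_perm_fixes_above[OF assms(1)] by blast
  \<comment> \<open>From L on, w y - y never decreases and eventually vanishes.\<close>
  have le: "w y \<le> y" if "L \<le> y" for y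
  proof -
    have "y \<le> y + Suc n"
      by simp
    then show ?thesis
    proof (induction rule: inc_induct)
      case base
      show ?case using n by simp
    next
      case (step m)
      then show ?case using incr[of m] \<open>L \<le> y\<close> by simp
    qed
  qed
  have onto: "w ` {..y} = {..y}" if "L \<le> y" for y
  proof (rule endo_inj_surj)
    show "w ` {..y} \<subseteq> {..y}"
    proof
      fix v
      assume "v \<in> w ` {..y}"
      then obtain z where "z \<le> y" "v = w z"
        by auto
      then show "v \<in> {..y}"
        using low[of z] le[of z] that by (cases "z < L") auto
    qed
    show "inj_on w {..y}"
      by (rule inj_on_subset[OF inj]) simp
  qed simp
  have "w x \<notin> w ` {..x - 1}"
    using inj \<open>L < x\<close> by (auto simp: inj_eq)
  then have "x - 1 < w x"
    using onto[of "x - 1"] \<open>L < x\<close> by auto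
  then show ?thesis
    using le[of x] \<open>L < x\<close> by simp
qed

lemma fin_perm_increasing_eq_id:
  assumes "fin_perm w" and "\<And>i. w i < w (Suc i)"
  shows "w = id"
proof -
  have "w x = x" for x
  proof (cases "x = 0")
    case False
    show ?thesis
      by (rule fixes_above_if_increasing[OF assms(1), of 0]) (use assms(2) False in auto)
  qed (use assms(1) in \<open>simp add: fin_perm_def\<close>)
  then show ?thesis
    by (simp add: fun_eq_iff)
qed

lemma fin_perm_descent_below:
  assumes "fin_perm w" and "\<And>x. n < x \<Longrightarrow> w x = x" and "w (Suc i) < w i"
  shows "i < n"
proof (rule ccontr)
  assume "\<not> i < n"
  then have "w (Suc i) = Suc i" and "n < w i"
    using assms(2,3) by auto
  then have "w (w i) = w i"
    using assms(2) by simp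
  moreover have "inj w"
    using assms(1) by (simp add: fin_perm_def bij_is_inj)
  ultimately show False
    using assms(3) \<open>w (Suc i) = Suc i\<close> by (simp add: inj_eq)
qed

lemma exists_word_of_length_num_inversions:
  assumes "fin_perm w" and "\<And>x. n < x \<Longrightarrow> w x = x"
  shows "\<exists>a. is_word a \<and> word_perm a = w \<and> length a = num_inversions w \<and> set a \<subseteq> {..<n}"
  using assms
proof (induction "num_inversions w" arbitrary: w rule: less_induct)
  case less
  show ?case
  proof (cases "\<exists>i. w (Suc i) < w i")
    case False
    then have "w = id"
      using fin_perm_increasing_eq_id fin_perm_ascent_if_not_descent less.prems(1) by blast
    then show ?thesis
      by (intro exI[of _ "[]"]) (simp add: is_word_def)
  next
    case True
    then obtain i where i: "w (Suc i) < w i"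
      by blast
    have "i \<noteq> 0"
      using i less.prems(1) by (cases i) (auto simp: fin_perm_def)
    have "i < n"
      using less.prems i by (rule fin_perm_descent_below)
    let ?v = "w \<circ> sigma i"
    have "fin_perm ?v"
      using less.prems(1) \<open>i \<noteq> 0\<close> by (simp add: fin_perm_comp_sigma)
    moreover have "\<And>x. n < x \<Longrightarrow> ?v x = x"
      using less.prems(2) \<open>i < n\<close> by (simp add: sigma_def)
    moreover have descent: "Suc (num_inversions ?v) = num_inversions w"
      using finite_inversions[OF less.prems(1)] i by (rule num_inversions_comp_sigma_descent)
    ultimately obtain a where a: "is_word a" "word_perm a = ?v" "length a = num_inversions ?v"
        "set a \<subseteq> {..<n}"
      using less.hyps[of ?v] by auto
    have "word_perm (a @ [i]) = w"
      using a(2) by (simp add: comp_assoc)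
    then show ?thesis
      using a descent \<open>i \<noteq> 0\<close> \<open>i < n\<close>
      by (intro exI[of _ "a @ [i]"]) (simp add: is_word_def)
  qed
qed

lemma num_inversions_le_length: "num_inversions (word_perm a) \<le> length a"
proof (induction a rule: rev_induct)
  case Nil
  show ?case
    by (simp only: word_perm_Nil num_inversions_id list.size(3) le_refl)
next
  case (snoc i a)
  have "num_inversions (word_perm a \<circ> sigma i) \<le> Suc (num_inversions (word_perm a))"
    by (rule num_inversions_comp_sigma_le)
  then show ?case
    unfolding word_perm_snoc length_append_singleton using snoc.IH by linarith
qed

lemma reduced_word_iff_num_inversions:
  "reduced_word w a \<longleftrightarrow> is_word a \<and> word_perm a = w \<and> length a = num_inversions w"
proof
  assume red: "reduced_word w a"
  then have "fin_perm w"
    using fin_perm_word_perm by (auto simp: reduced_word_def)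
  then obtain b where "is_word b" "word_perm b = w" "length b = num_inversions w"
    using exists_word_of_length_num_inversions fin_perm_fixes_above by blast
  then show "is_word a \<and> word_perm a = w \<and> length a = num_inversions w"
    using red num_inversions_le_length[of a] unfolding reduced_word_def by force
next
  assume "is_word a \<and> word_perm a = w \<and> length a = num_inversions w"
  then show "reduced_word w a"
    using num_inversions_le_length unfolding reduced_word_def by metis
qed

lemma exists_reduced_word_below:
  assumes "fin_perm w" and "\<And>x. n < x \<Longrightarrow> w x = x"
  shows "\<exists>a. reduced_word w a \<and> set a \<subseteq> {..<n}"
  using exists_word_of_length_num_inversions[OF assms] reduced_word_iff_num_inversions by blast

lemma exists_reduced_word: "fin_perm w \<Longrightarrow> \<exists>a. reduced_word w a"
  using exists_reduced_word_below fin_perm_fixes_above by meson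

lemma reduced_word_fin_perm: "reduced_word w a \<Longrightarrow> fin_perm w"
  using fin_perm_word_perm by (auto simp: reduced_word_def)

lemma reduced_word_snoc_descent:
  assumes red: "reduced_word (w \<circ> sigma i) a" and "w (Suc i) < w i" and "1 \<le> i"
  shows "reduced_word w (a @ [i])"
proof -
  have "fin_perm (w \<circ> sigma i \<circ> sigma i)"
    using reduced_word_fin_perm[OF red] \<open>1 \<le> i\<close> by (rule fin_perm_comp_sigma)
  then have "fin_perm w"
    by (simp add: comp_assoc)
  then have "Suc (num_inversions (w \<circ> sigma i)) = num_inversions w"
    using finite_inversions \<open>w (Suc i) < w i\<close> num_inversions_comp_sigma_descent by blast
  moreover have "word_perm (a @ [i]) = w"
    using red by (simp add: reduced_word_iff_num_inversions comp_assoc)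
  ultimately show ?thesis
    using red \<open>1 \<le> i\<close> by (simp add: reduced_word_iff_num_inversions is_word_def)
qed

lemma reduced_word_prefix:
  assumes red: "reduced_word w (a @ b)"
  shows "reduced_word (word_perm a) a"
  unfolding reduced_word_def
proof (intro conjI allI impI)
  show "is_word a"
    using red by (simp add: reduced_word_def is_word_def)
  show "word_perm a = word_perm a" ..
next
  fix c
  assume "is_word c \<and> word_perm c = word_perm a"
  then have "is_word (c @ b) \<and> word_perm (c @ b) = w"
    using red by (auto simp: reduced_word_def is_word_def)
  then show "length a \<le> length c"
    using red unfolding reduced_word_def by fastforce
qed

lemma reduced_word_snoc_ascent:
  assumes red: "reduced_word w (a @ [i])"
  shows "word_perm a i < word_perm a (Suc i)"
proof (rule ccontr)
  let ?W = "word_perm a"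
  assume "\<not> ?W i < ?W (Suc i)"
  moreover have "fin_perm ?W"
    using red fin_perm_word_perm by (simp add: reduced_word_def is_word_def)
  ultimately have "?W (Suc i) < ?W i"
    using fin_perm_ascent_if_not_descent by blast
  then have "Suc (num_inversions (?W \<circ> sigma i)) = num_inversions ?W"
    using finite_inversions[OF \<open>fin_perm ?W\<close>] num_inversions_comp_sigma_descent by blast
  moreover have "length (a @ [i]) = num_inversions (?W \<circ> sigma i)"
    using red by (simp add: reduced_word_iff_num_inversions)
  ultimately show False
    using num_inversions_le_length[of a] by simp
qed

lemma reduced_word_rev:
  assumes red: "reduced_word w a"
  shows "reduced_word (inv w) (rev a)"
  unfolding reduced_word_def
proof (intro conjI allI impI)
  show "is_word (rev a)" "word_perm (rev a) = inv w"
    using red by (auto simp: reduced_word_def is_word_def word_perm_rev)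
next
  fix c
  assume "is_word c \<and> word_perm c = inv w"
  moreover have "bij w"
    using reduced_word_fin_perm[OF red] by (simp add: fin_perm_def)
  ultimately have "is_word (rev c)" "word_perm (rev c) = w"
    by (auto simp: is_word_def word_perm_rev inv_inv_eq)
  then show "length (rev a) \<le> length c"
    using red by (auto simp: reduced_word_def)
qed

lemma fin_perm_inv: "fin_perm w \<Longrightarrow> fin_perm (inv w)"
  using exists_reduced_word reduced_word_rev reduced_word_fin_perm by blast

lemma reduced_word_inv_iff:
  assumes "fin_perm w"
  shows "reduced_word (inv w) a \<longleftrightarrow> reduced_word w (rev a)"
proof
  assume "reduced_word (inv w) a"
  then have "reduced_word (inv (inv w)) (rev a)"
    by (rule reduced_word_rev)
  then show "reduced_word w (rev a)"
    using assms by (simp add: fin_perm_def inv_inv_eq)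
next
  assume "reduced_word w (rev a)"
  then show "reduced_word (inv w) a"
    using reduced_word_rev by fastforce
qed

section \<open>Permutations splitting at k\<close>

text \<open>Position 0 is fixed by every permutation satisfying fin_perm, so including it is harmless.\<close>

definition splits_at :: "nat \<Rightarrow> (nat \<Rightarrow> nat) \<Rightarrow> bool" where
  "splits_at k w \<longleftrightarrow> (\<forall>x\<le>k. w x \<le> Suc k)"

lemma splits_at_inv_iff:
  assumes "fin_perm w"
  shows "splits_at k (inv w) \<longleftrightarrow> (\<forall>y. w y \<le> k \<longrightarrow> y \<le> Suc k)"
proof -
  have "bij w"
    using assms by (simp add: fin_perm_def)
  then show ?thesis
    unfolding splits_at_def by (metis bij_inv_eq_iff)
qed

lemma splits_at_comp_sigma: "i \<noteq> k \<Longrightarrow> splits_at k (w \<circ> sigma i) \<longleftrightarrow> splits_at k w"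
  unfolding splits_at_def by (metis comp_apply sigma_le_iff sigma_sigma)

lemma splits_at_inv_comp_sigma:
  assumes "fin_perm w" and "1 \<le> i" and "i \<noteq> Suc k"
  shows "splits_at k (inv (w \<circ> sigma i)) \<longleftrightarrow> splits_at k (inv w)"
  unfolding splits_at_inv_iff[OF assms(1)] splits_at_inv_iff[OF fin_perm_comp_sigma[OF assms(1,2)]]
  by (metis assms(3) comp_apply sigma_le_iff sigma_sigma)

lemma splits_at_word_perm:
  assumes "\<forall>x\<in>set u. x \<le> k" and "\<forall>x\<in>set v. Suc k \<le> x"
  shows "splits_at k (word_perm (u @ v))"
  unfolding splits_at_def
proof (intro allI impI)
  fix x
  assume "x \<le> k"
  then have "word_perm v x = x"
    using assms(2) by (intro word_perm_fixes) auto
  moreover have "Suc k \<notin> set u"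
    using assms(1) by auto
  ultimately show "word_perm (u @ v) x \<le> Suc k"
    using word_perm_le_iff[of "Suc k" u x] \<open>x \<le> k\<close> by simp
qed

lemma splits_at_comp_sigma_ascent:
  assumes "splits_at k (w \<circ> sigma i)" and "w i < w (Suc i)"
  shows "splits_at k w"
proof (cases "i = k")
  case True
  show ?thesis
    unfolding splits_at_def
  proof (intro allI impI)
    fix x
    assume "x \<le> k"
    then have "(w \<circ> sigma i) x \<le> Suc k"
      using assms(1) by (simp add: splits_at_def)
    then show "w x \<le> Suc k"
      using True assms(2) \<open>x \<le> k\<close> by (cases "x = k") (simp_all add: sigma_other)
  qed
next
  case False
  then show ?thesis
    using assms(1) splits_at_comp_sigma by blast
qed

lemma splits_at_prefix:
  assumes "reduced_word w (a @ b)" and "splits_at k w"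
  shows "splits_at k (word_perm a)"
  using assms
proof (induction b arbitrary: w rule: rev_induct)
  case Nil
  then show ?case
    by (simp add: reduced_word_def)
next
  case (snoc i b)
  let ?W = "word_perm (a @ b)"
  have "reduced_word ?W (a @ b)"
    using snoc.prems(1) reduced_word_prefix[of w "a @ b" "[i]"] by simp
  moreover have "splits_at k ?W"
  proof (rule splits_at_comp_sigma_ascent)
    show "splits_at k (?W \<circ> sigma i)"
      using snoc.prems by (simp add: reduced_word_def comp_assoc)
    show "?W i < ?W (Suc i)"
      using snoc.prems(1) reduced_word_snoc_ascent[of w "a @ b" i] by simp
  qed
  ultimately show ?case
    by (rule snoc.IH)
qed

lemma splits_at_ascent:
  assumes "fin_perm w" and "splits_at k w" and "w (Suc k) < w (Suc (Suc k))"
  shows "Suc k < w (Suc (Suc k))"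
proof (rule ccontr)
  assume "\<not> Suc k < w (Suc (Suc k))"
  then have "w ` {..Suc (Suc k)} \<subseteq> {..Suc k}"
    using assms(2,3) by (auto simp: splits_at_def le_Suc_eq)
  moreover have "inj_on w {..Suc (Suc k)}"
    using assms(1) unfolding fin_perm_def by (meson bij_is_inj inj_on_subset subset_UNIV)
  ultimately have "card {..Suc (Suc k)} \<le> card {..Suc k}"
    by (intro card_inj_on_le) simp_all
  then show False
    by simp
qed

lemma splits_at_reduced_word_after_Suc:
  assumes "reduced_word w (l @ Suc k # r)" and "splits_at k w"
  shows "Suc k < w (Suc k) \<and> k \<notin> set r"
  using assms
proof (induction r arbitrary: w rule: rev_induct)
  case Nil
  let ?W = "word_perm l"
  have "fin_perm ?W"
    using Nil.prems(1) fin_perm_word_perm by (simp add: reduced_word_def is_word_def)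
  moreover have "splits_at k ?W"
    using Nil.prems splits_at_prefix by blast
  moreover have "?W (Suc k) < ?W (Suc (Suc k))"
    using Nil.prems(1) reduced_word_snoc_ascent by simp
  ultimately have "Suc k < ?W (Suc (Suc k))"
    by (rule splits_at_ascent)
  then show ?case
    using Nil.prems(1) by (auto simp: reduced_word_def)
next
  case (snoc i r)
  let ?W = "word_perm (l @ Suc k # r)"
  have red: "reduced_word ?W (l @ Suc k # r)"
    using snoc.prems(1) reduced_word_prefix[of w "l @ Suc k # r" "[i]"] by simp
  have w: "w = ?W \<circ> sigma i"
    using snoc.prems(1) by (simp add: reduced_word_def comp_assoc)
  have ascent: "?W i < ?W (Suc i)"
    using snoc.prems(1) reduced_word_snoc_ascent[of w "l @ Suc k # r" i] by simp
  then have "splits_at k ?W"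
    using snoc.prems(2) w splits_at_comp_sigma_ascent by blast
  then have IH: "Suc k < ?W (Suc k)" "k \<notin> set r"
    using snoc.IH red by blast+
  have "i \<noteq> k"
  proof
    assume "i = k"
    then have "w k = ?W (Suc k)"
      using w by simp
    then show False
      using IH(1) snoc.prems(2) by (auto simp: splits_at_def dest: spec[of _ k])
  qed
  moreover have "Suc k < w (Suc k)"
  proof (cases "i = Suc k")
    case True
    then show ?thesis
      using w ascent IH(1) by simp
  next
    case False
    then show ?thesis
      using w IH(1) \<open>i \<noteq> k\<close> by (simp add: sigma_other)
  qed
  ultimately show ?case
    using IH(2) by simp
qed

definition occurs_before :: "nat list \<Rightarrow> nat \<Rightarrow> nat \<Rightarrow> bool" where
  "occurs_before a x y \<longleftrightarrow> (\<exists>l r. a = l @ x # r \<and> y \<in> set r)"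

lemma occurs_before_nth:
  assumes "p < q" and "q < length a"
  shows "occurs_before a (a ! p) (a ! q)"
proof -
  have "a = take p a @ a ! p # drop (Suc p) a"
    using assms by (simp add: id_take_nth_drop)
  moreover have "drop (Suc p) a ! (q - Suc p) \<in> set (drop (Suc p) a)"
    using assms by (intro nth_mem) simp
  then have "a ! q \<in> set (drop (Suc p) a)"
    using assms by simp
  ultimately show ?thesis
    unfolding occurs_before_def by blast
qed

lemma has_pattern_occurs_before:
  assumes "has_pattern a x y"
  shows "occurs_before a x y \<and> occurs_before a y x"
proof -
  obtain p q r where "p < q" "q < r" "r < length a" "a ! p = x" "a ! q = y" "a ! r = x"
    using assms unfolding has_pattern_def by blast
  then show ?thesis
    using occurs_before_nth[of p q a] occurs_before_nth[of q r a] by simp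
qed

lemma occurs_before_rev:
  assumes "occurs_before a x y"
  shows "occurs_before (rev a) y x"
proof -
  obtain l r where "a = l @ x # r" "y \<in> set r"
    using assms unfolding occurs_before_def by blast
  moreover obtain r1 r2 where "r = r1 @ y # r2"
    using \<open>y \<in> set r\<close> split_list by metis
  ultimately have "rev a = rev r2 @ y # (rev r1 @ x # rev l)"
    by simp
  then show ?thesis
    unfolding occurs_before_def by fastforce
qed

lemma splits_at_not_occurs_before:
  "reduced_word w a \<Longrightarrow> splits_at k w \<Longrightarrow> \<not> occurs_before a (Suc k) k"
  unfolding occurs_before_def using splits_at_reduced_word_after_Suc by blast

lemma splits_at_exists_reduced_word:
  assumes "fin_perm w" and "splits_at k w"
  shows "\<exists>u v. reduced_word w (u @ v) \<and> (\<forall>x\<in>set u. x \<le> k) \<and> (\<forall>x\<in>set v. Suc k \<le> x)"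
  using assms
proof (induction "num_inversions w" arbitrary: w rule: less_induct)
  case less
  show ?case
  proof (cases "\<exists>i\<ge>Suc k. w (Suc i) < w i")
    case True
    then obtain i where i: "Suc k \<le> i" "w (Suc i) < w i"
      by blast
    let ?v = "w \<circ> sigma i"
    have "fin_perm ?v"
      using less.prems(1) i(1) by (simp add: fin_perm_comp_sigma)
    moreover have "splits_at k ?v"
      using less.prems(2) i(1) splits_at_comp_sigma by simp
    moreover have "num_inversions ?v < num_inversions w"
      using num_inversions_comp_sigma_descent[OF finite_inversions[OF less.prems(1)] i(2)] by simp
    ultimately obtain u v where uv: "reduced_word ?v (u @ v)"
        "\<forall>x\<in>set u. x \<le> k" "\<forall>x\<in>set v. Suc k \<le> x"
      using less.hyps by blast
    have "reduced_word w (u @ v @ [i])"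
      using reduced_word_snoc_descent[OF uv(1) i(2)] i(1) by simp
    then show ?thesis
      using uv(2,3) i(1) by (intro exI[of _ u] exI[of _ "v @ [i]"]) auto
  next
    case False
    have "w x = x" if "Suc k < x" for x
    proof (rule fixes_above_if_increasing[OF less.prems(1) _ _ that])
      show "w i < w (Suc i)" if "Suc k \<le> i" for i
        using False that fin_perm_ascent_if_not_descent[OF less.prems(1)] by blast
      show "w z \<le> Suc k" if "z < Suc k" for z
        using less.prems(2) that by (simp add: splits_at_def)
    qed
    then obtain a where "reduced_word w a" "set a \<subseteq> {..<Suc k}"
      using exists_reduced_word_below[OF less.prems(1)] by blast
    then show ?thesis
      by (intro exI[of _ a] exI[of _ "[]"]) auto
  qed
qed

lemma splits_at_iff_exists_reduced_word:
  assumes "fin_perm w"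
  shows "splits_at k w \<longleftrightarrow>
    (\<exists>u v. reduced_word w (u @ v) \<and> (\<forall>x\<in>set u. x \<le> k) \<and> (\<forall>x\<in>set v. Suc k \<le> x))"
proof
  assume "\<exists>u v. reduced_word w (u @ v) \<and> (\<forall>x\<in>set u. x \<le> k) \<and> (\<forall>x\<in>set v. Suc k \<le> x)"
  then obtain u v where "word_perm (u @ v) = w" "\<forall>x\<in>set u. x \<le> k" "\<forall>x\<in>set v. Suc k \<le> x"
    unfolding reduced_word_def by blast
  then show "splits_at k w"
    using splits_at_word_perm by blast
qed (rule splits_at_exists_reduced_word[OF assms])

lemma splits_at_inv_iff_exists_reduced_word:
  assumes "fin_perm w"
  shows "splits_at k (inv w) \<longleftrightarrow>
    (\<exists>u v. reduced_word w (u @ v) \<and> (\<forall>x\<in>set u. Suc k \<le> x) \<and> (\<forall>x\<in>set v. x \<le> k))"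
    (is "_ \<longleftrightarrow> (\<exists>u v. reduced_word w (u @ v) \<and> ?high_low u v)")
proof -
  have "splits_at k (inv w) \<longleftrightarrow>
      (\<exists>u v. reduced_word (inv w) (u @ v) \<and> ?high_low (rev v) (rev u))"
    using splits_at_iff_exists_reduced_word[OF fin_perm_inv[OF assms], of k] by auto
  also have "\<dots> \<longleftrightarrow> (\<exists>u v. reduced_word w (rev v @ rev u) \<and> ?high_low (rev v) (rev u))"
    using reduced_word_inv_iff[OF assms] by simp
  also have "\<dots> \<longleftrightarrow> (\<exists>u v. reduced_word w (u @ v) \<and> ?high_low u v)"
  proof
    assume "\<exists>u v. reduced_word w (rev v @ rev u) \<and> ?high_low (rev v) (rev u)"
    then show "\<exists>u v. reduced_word w (u @ v) \<and> ?high_low u v"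
      by blast
  next
    assume "\<exists>u v. reduced_word w (u @ v) \<and> ?high_low u v"
    then obtain u v where "reduced_word w (u @ v)" "?high_low u v"
      by blast
    then show "\<exists>u v. reduced_word w (rev v @ rev u) \<and> ?high_low (rev v) (rev u)"
      by (intro exI[of _ "rev v"] exI[of _ "rev u"]) simp
  qed
  finally show ?thesis .
qed

section \<open>Reduced words with a pattern\<close>

lemma has_pattern_append:
  assumes "has_pattern a x y"
  shows "has_pattern (a @ b) x y"
proof -
  obtain p q r where "p < q" "q < r" "r < length a" "a ! p = x" "a ! q = y" "a ! r = x"
    using assms unfolding has_pattern_def by blast
  then show ?thesis
    unfolding has_pattern_def
    by (intro exI[of _ p] exI[of _ q] exI[of _ r]) (simp add: nth_append)
qed

lemma has_pattern_append_pair: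
  assumes "x \<in> set b"
  shows "has_pattern (b @ [y, x]) x y"
proof -
  obtain p where "p < length b" "b ! p = x"
    using assms by (meson in_set_conv_nth)
  then show ?thesis
    unfolding has_pattern_def
    by (intro exI[of _ p] exI[of _ "length b"] exI[of _ "Suc (length b)"]) (simp add: nth_append)
qed

lemma exists_reduced_word_with_pattern_if_crossing:
  assumes "fin_perm w" and "1 \<le> k" and wk: "Suc k < w k" and wSSk: "w (Suc (Suc k)) \<le> k"
  shows "\<exists>a. reduced_word w a \<and> (has_pattern a k (Suc k) \<or> has_pattern a (Suc k) k)"
proof -
  consider (up) "w k < w (Suc k)"
    | (down_up) "w (Suc k) < w k" "w (Suc k) < w (Suc (Suc k))"
    | (down_down) "w (Suc (Suc k)) < w (Suc k)" "w (Suc k) < w k"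
    using fin_perm_ascent_if_not_descent[OF assms(1), of k]
      fin_perm_ascent_if_not_descent[OF assms(1), of "Suc k"] by blast
  then show ?thesis
  proof cases
    case up
    obtain b where b: "reduced_word (w \<circ> sigma (Suc k) \<circ> sigma k) b"
      using assms(1,2) by (meson exists_reduced_word fin_perm_comp_sigma le_SucI)
    have "Suc k \<in> set b"
    proof (rule ccontr)
      assume "Suc k \<notin> set b"
      then have "word_perm b (Suc k) \<le> Suc k"
        by (simp add: word_perm_le_iff)
      then show False
        using b wk by (simp add: reduced_word_def sigma_def)
    qed
    have "reduced_word (w \<circ> sigma (Suc k)) (b @ [k])"
      by (rule reduced_word_snoc_descent[OF b]) (use wk wSSk assms(2) in \<open>simp_all add: sigma_def\<close>)
    then have "reduced_word w ((b @ [k]) @ [Suc k])"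
      by (rule reduced_word_snoc_descent) (use up wk wSSk in simp_all)
    moreover have "has_pattern (b @ [k, Suc k]) (Suc k) k"
      using \<open>Suc k \<in> set b\<close> by (rule has_pattern_append_pair)
    ultimately show ?thesis
      by auto
  next
    case down_up
    obtain b where b: "reduced_word (w \<circ> sigma k \<circ> sigma (Suc k)) b"
      using assms(1,2) by (meson exists_reduced_word fin_perm_comp_sigma le_SucI)
    have "k \<in> set b"
    proof (rule ccontr)
      assume "k \<notin> set b"
      then have "\<not> word_perm b (Suc k) \<le> k"
        by (simp add: word_perm_le_iff)
      then show False
        using b wSSk by (simp add: reduced_word_def sigma_def)
    qed
    have "reduced_word (w \<circ> sigma k) (b @ [Suc k])"
      by (rule reduced_word_snoc_descent[OF b]) (use wk wSSk in \<open>simp_all add: sigma_def\<close>)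
    then have "reduced_word w ((b @ [Suc k]) @ [k])"
      by (rule reduced_word_snoc_descent) (use down_up assms(2) in simp_all)
    moreover have "has_pattern (b @ [Suc k, k]) k (Suc k)"
      using \<open>k \<in> set b\<close> by (rule has_pattern_append_pair)
    ultimately show ?thesis
      by auto
  next
    case down_down
    obtain b where b: "reduced_word (w \<circ> sigma k \<circ> sigma (Suc k) \<circ> sigma k) b"
      using assms(1,2) by (meson exists_reduced_word fin_perm_comp_sigma le_SucI)
    have "reduced_word (w \<circ> sigma k \<circ> sigma (Suc k)) (b @ [k])"
      by (rule reduced_word_snoc_descent[OF b]) (use down_down assms(2) in \<open>simp_all add: sigma_def\<close>)
    then have "reduced_word (w \<circ> sigma k) ((b @ [k]) @ [Suc k])"
      by (rule reduced_word_snoc_descent) (use down_down in \<open>simp_all add: sigma_def\<close>)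
    then have "reduced_word w (((b @ [k]) @ [Suc k]) @ [k])"
      by (rule reduced_word_snoc_descent) (use down_down assms(2) in simp_all)
    moreover have "has_pattern ((b @ [k]) @ [Suc k, k]) k (Suc k)"
      by (rule has_pattern_append_pair) simp
    ultimately show ?thesis
      by auto
  qed
qed

lemma exists_reduced_word_with_pattern:
  assumes "fin_perm w" and "\<not> splits_at k w" and "\<not> splits_at k (inv w)"
  shows "\<exists>a. reduced_word w a \<and> (has_pattern a k (Suc k) \<or> has_pattern a (Suc k) k)"
  using assms
proof (induction "num_inversions w" arbitrary: w rule: less_induct)
  case less
  have w0: "w 0 = 0"
    using less.prems(1) by (simp add: fin_perm_def)
  show ?case
  proof (cases "\<exists>i. i \<noteq> k \<and> i \<noteq> Suc k \<and> w (Suc i) < w i")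
    case True
    then obtain i where i: "i \<noteq> k" "i \<noteq> Suc k" "w (Suc i) < w i"
      by blast
    have "1 \<le> i"
      using i(3) w0 by (cases i) auto
    let ?v = "w \<circ> sigma i"
    have "fin_perm ?v"
      using less.prems(1) \<open>1 \<le> i\<close> by (rule fin_perm_comp_sigma)
    moreover have "\<not> splits_at k ?v" "\<not> splits_at k (inv ?v)"
      using less.prems i(1,2) \<open>1 \<le> i\<close> splits_at_comp_sigma splits_at_inv_comp_sigma by auto
    moreover have "num_inversions ?v < num_inversions w"
      using num_inversions_comp_sigma_descent[OF finite_inversions[OF less.prems(1)] i(3)] by simp
    ultimately obtain a where a: "reduced_word ?v a"
        "has_pattern a k (Suc k) \<or> has_pattern a (Suc k) k"
      using less.hyps[of ?v] by blast
    have "reduced_word w (a @ [i])"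
      using reduced_word_snoc_descent[OF a(1) i(3) \<open>1 \<le> i\<close>] .
    then show ?thesis
      using a(2) has_pattern_append[of a] by blast
  next
    case False
    then have incr: "w i < w (Suc i)" if "i \<noteq> k" "i \<noteq> Suc k" for i
      using fin_perm_ascent_if_not_descent[OF less.prems(1)] that by blast
    obtain x where x: "x \<le> k" "Suc k < w x"
      using less.prems(2) by (auto simp: splits_at_def not_le)
    obtain y where y: "Suc k < y" "w y \<le> k"
      using less.prems(3) splits_at_inv_iff[OF less.prems(1)] by (auto simp: not_le)
    have "w x \<le> w k"
      using incr x(1) by (intro le_if_increasing_between[of x k w]) auto
    moreover have "w (Suc (Suc k)) \<le> w y"
      using incr y(1) by (intro le_if_increasing_between[of "Suc (Suc k)" y w]) auto
    moreover have "1 \<le> k"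
      using x w0 by (cases x) auto
    ultimately show ?thesis
      using exists_reduced_word_with_pattern_if_crossing[OF less.prems(1)] x(2) y(2) by simp
  qed
qed

theorem proposition3p10:
  fixes w :: "nat \<Rightarrow> nat" and k :: nat
  assumes "fin_perm w"
    and "{k, k + 1} \<subseteq> supp w"
  defines "P1 \<equiv> (\<exists>a. reduced_word w a \<and>
                    (has_pattern a k (k + 1) \<or> has_pattern a (k + 1) k))"
    and "P2 \<equiv> (\<exists>u v. reduced_word w (u @ v) \<and>
                    (((\<forall>x\<in>set u. x \<le> k) \<and> (\<forall>x\<in>set v. k + 1 \<le> x)) \<or>
                     ((\<forall>x\<in>set u. k + 1 \<le> x) \<and> (\<forall>x\<in>set v. x \<le> k))))"
  shows "(P1 \<and> \<not> P2) \<or> (\<not> P1 \<and> P2)"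
proof -
  have "P2 \<longleftrightarrow> splits_at k w \<or> splits_at k (inv w)"
    unfolding P2_def splits_at_iff_exists_reduced_word[OF assms(1)]
      splits_at_inv_iff_exists_reduced_word[OF assms(1)]
    by auto
  moreover have "P1 \<longleftrightarrow> \<not> splits_at k w \<and> \<not> splits_at k (inv w)"
  proof
    assume P1
    then obtain a where red: "reduced_word w a"
      and "has_pattern a k (Suc k) \<or> has_pattern a (Suc k) k"
      unfolding P1_def by auto
    then have "occurs_before a (Suc k) k" "occurs_before (rev a) (Suc k) k"
      using has_pattern_occurs_before occurs_before_rev by blast+
    moreover have "reduced_word (inv w) (rev a)"
      using red by (rule reduced_word_rev)
    ultimately show "\<not> splits_at k w \<and> \<not> splits_at k (inv w)"
      using red splits_at_not_occurs_before by blast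
  next
    assume "\<not> splits_at k w \<and> \<not> splits_at k (inv w)"
    then show P1
      unfolding P1_def using exists_reduced_word_with_pattern[OF assms(1)] by simp
  qed
  ultimately show ?thesis
    by blast
qed

end
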